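(* Let $(S,K,I)$ be a balanced split graph with $|I|\ge2$ such that $\Phi(S)$ is complete. If $x$ is an inactive vertex of $S$, then $x$ is universal in $S$.
   Context: All graphs are finite and simple. A split graph is a graph $S$ whose vertex set is a disjoint union $V(S)=K\,\dot\cup\,I$ with $K$ a clique and $I$ an independent set; $(K,I)$ is called a bipartition of $S$, and $(S,K,I)$ denotes $S$ together with this fixed bipartition. A 2-switch in a graph $G$ is performed on four distinct vertices $a,b,c,d$ with $ab,cd\in E(G)$ and $ac,bd\notin E(G)$: it deletes $ab,cd$ and adds $ac,bd$; $a,b,c,d$ are said to participate in it. A vertex is active in $G$ if it participates in some 2-switch on $G$, otherwise inactive. A vertex is universal if it is adjacent to all other vertices. For a split graph $(S,K,I)$ and distinct $u,v\in I$, $\sigma_{uv}(S)$ is the number of induced subgraphs of $S$ isomorphic to $P_4$ containing both $u$ and $v$. The factor graph $\Phi(S)$ is the loopless multigraph with vertex set $I$ having exactly $\sigma_{uv}(S)$ parallel edges between $u$ and $v$. Graph notions (connected, complete, etc.) applied to $\Phi(S)$ refer to its underlying simple graph, in which $u\sim v$ iff $\sigma_{uv}(S)\ge1$. A vertex $w$ of $(S,K,I)$ is swing if $N_S(w)=K\setminus\{w\}$. $(S,K,I)$ is balanced if $|K|=\omega(S)$ and $|I|=\alpha(S)$; it is known that $S$ is balanced iff it has no swing vertex. *)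

theory Defs
  imports Main
begin

definition graph :: "'a set \<Rightarrow> ('a \<Rightarrow> 'a \<Rightarrow> bool) \<Rightarrow> bool" where
  "graph V E \<longleftrightarrow> finite V \<and> (\<forall>x y. E x y \<longrightarrow> E y x) \<and> (\<forall>x. \<not> E x x)
     \<and> (\<forall>x y. E x y \<longrightarrow> x \<in> V \<and> y \<in> V)"

definition is_clique :: "('a \<Rightarrow> 'a \<Rightarrow> bool) \<Rightarrow> 'a set \<Rightarrow> bool" where
  "is_clique E C \<longleftrightarrow> (\<forall>x\<in>C. \<forall>y\<in>C. x \<noteq> y \<longrightarrow> E x y)"

definition is_indep :: "('a \<Rightarrow> 'a \<Rightarrow> bool) \<Rightarrow> 'a set \<Rightarrow> bool" where
  "is_indep E A \<longleftrightarrow> (\<forall>x\<in>A. \<forall>y\<in>A. \<not> E x y)"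

definition clique_number :: "'a set \<Rightarrow> ('a \<Rightarrow> 'a \<Rightarrow> bool) \<Rightarrow> nat" where
  "clique_number V E = Max {card C | C. C \<subseteq> V \<and> is_clique E C}"

definition indep_number :: "'a set \<Rightarrow> ('a \<Rightarrow> 'a \<Rightarrow> bool) \<Rightarrow> nat" where
  "indep_number V E = Max {card A | A. A \<subseteq> V \<and> is_indep E A}"

definition split_graph :: "'a set \<Rightarrow> ('a \<Rightarrow> 'a \<Rightarrow> bool) \<Rightarrow> 'a set \<Rightarrow> 'a set \<Rightarrow> bool" where
  "split_graph V E K I \<longleftrightarrow> graph V E \<and> V = K \<union> I \<and> K \<inter> I = {}
     \<and> is_clique E K \<and> is_indep E I"

definition balanced :: "'a set \<Rightarrow> ('a \<Rightarrow> 'a \<Rightarrow> bool) \<Rightarrow> 'a set \<Rightarrow> 'a set \<Rightarrow> bool" where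
  "balanced V E K I \<longleftrightarrow> card K = clique_number V E \<and> card I = indep_number V E"

definition two_switchable :: "'a set \<Rightarrow> ('a \<Rightarrow> 'a \<Rightarrow> bool) \<Rightarrow> 'a \<Rightarrow> 'a \<Rightarrow> 'a \<Rightarrow> 'a \<Rightarrow> bool" where
  "two_switchable V E a b c d \<longleftrightarrow> a \<in> V \<and> b \<in> V \<and> c \<in> V \<and> d \<in> V
     \<and> distinct [a, b, c, d] \<and> E a b \<and> E c d \<and> \<not> E a c \<and> \<not> E b d"

definition active :: "'a set \<Rightarrow> ('a \<Rightarrow> 'a \<Rightarrow> bool) \<Rightarrow> 'a \<Rightarrow> bool" where
  "active V E x \<longleftrightarrow> (\<exists>a b c d. two_switchable V E a b c d \<and> x \<in> {a, b, c, d})"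

definition universal :: "'a set \<Rightarrow> ('a \<Rightarrow> 'a \<Rightarrow> bool) \<Rightarrow> 'a \<Rightarrow> bool" where
  "universal V E x \<longleftrightarrow> (\<forall>y\<in>V. y \<noteq> x \<longrightarrow> E x y)"

definition induced_P4 :: "'a set \<Rightarrow> ('a \<Rightarrow> 'a \<Rightarrow> bool) \<Rightarrow> 'a set \<Rightarrow> bool" where
  "induced_P4 V E X \<longleftrightarrow> X \<subseteq> V \<and> (\<exists>a b c d. distinct [a, b, c, d] \<and> X = {a, b, c, d}
     \<and> E a b \<and> E b c \<and> E c d \<and> \<not> E a c \<and> \<not> E a d \<and> \<not> E b d)"

definition sigma :: "'a set \<Rightarrow> ('a \<Rightarrow> 'a \<Rightarrow> bool) \<Rightarrow> 'a \<Rightarrow> 'a \<Rightarrow> nat" where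
  "sigma V E u v = card {X. induced_P4 V E X \<and> u \<in> X \<and> v \<in> X}"

text \<open>Underlying simple graph of the factor graph Phi(S) on vertex set I.\<close>
definition factor_adj :: "'a set \<Rightarrow> ('a \<Rightarrow> 'a \<Rightarrow> bool) \<Rightarrow> 'a \<Rightarrow> 'a \<Rightarrow> bool" where
  "factor_adj V E u v \<longleftrightarrow> u \<noteq> v \<and> sigma V E u v \<ge> 1"

definition factor_complete :: "'a set \<Rightarrow> ('a \<Rightarrow> 'a \<Rightarrow> bool) \<Rightarrow> 'a set \<Rightarrow> bool" where
  "factor_complete V E I \<longleftrightarrow> (\<forall>u\<in>I. \<forall>v\<in>I. u \<noteq> v \<longrightarrow> factor_adj V E u v)"

end

theory Submission
  imports Defs
begin

text \<open>A vertex of I lies on an induced P4, hence on a 2-switch, as soon as it has a neighbour in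
  the (complete) factor graph. A vertex x of K has a neighbour w in I, since otherwise x could be
  added to I, contradicting balancedness. If x missed some u in I, an induced P4 through u and w
  would supply y in K adjacent to u but not to w, and replacing xw, uy by xu, wy would be a
  2-switch.\<close>

lemma split_graphD:
  assumes "split_graph V E K I"
  shows "finite V" "V = K \<union> I" "K \<inter> I = {}" "is_clique E K" "is_indep E I"
    "E p q \<Longrightarrow> E q p" "\<not> E p p"
  using assms unfolding split_graph_def graph_def by auto

lemma induced_P4_imp_active:
  assumes "induced_P4 V E X" "x \<in> X"
  shows "active V E x"
proof -
  from assms(1) obtain a b c d where "X \<subseteq> V" "distinct [a, b, c, d]" "X = {a, b, c, d}"
    "E a b" "E c d" "\<not> E a c" "\<not> E b d"
    unfolding induced_P4_def by blast
  then have "two_switchable V E a b c d" "x \<in> {a, b, c, d}"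
    using assms(2) unfolding two_switchable_def by auto
  then show ?thesis unfolding active_def by blast
qed

lemma factor_adj_obtains_induced_P4:
  assumes "factor_adj V E u v"
  obtains X where "induced_P4 V E X" "u \<in> X" "v \<in> X"
proof -
  have "card {X. induced_P4 V E X \<and> u \<in> X \<and> v \<in> X} \<noteq> 0"
    using assms unfolding factor_adj_def sigma_def by linarith
  then have "{X. induced_P4 V E X \<and> u \<in> X \<and> v \<in> X} \<noteq> {}" by (metis card.empty)
  then show ?thesis using that by blast
qed

lemma induced_P4_in_split_graph:
  assumes "split_graph V E K I" "induced_P4 V E X"
  obtains a b c d where "X = {a, b, c, d}" "a \<in> I" "d \<in> I" "b \<in> K" "c \<in> K"
    "E a b" "E c d" "\<not> E a c" "\<not> E b d"
proof -
  from assms(2) obtain a b c d where P4: "X \<subseteq> V" "distinct [a, b, c, d]" "X = {a, b, c, d}"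
    "E a b" "E b c" "E c d" "\<not> E a c" "\<not> E a d" "\<not> E b d"
    unfolding induced_P4_def by blast
  have "a \<in> I \<and> d \<in> I \<and> b \<in> K \<and> c \<in> K"
    using P4 split_graphD(2-5)[OF assms(1)] unfolding is_clique_def is_indep_def by auto
  then show ?thesis using that P4 by blast
qed

text \<open>u and w must be the two ends of the path, and each end has a neighbour on it that the
  other end misses.\<close>

lemma induced_P4_separating_neighbour:
  assumes "split_graph V E K I" "induced_P4 V E X"
    and "u \<in> X" "w \<in> X" "u \<in> I" "w \<in> I" "u \<noteq> w"
  obtains y where "y \<in> K" "E u y" "\<not> E w y"
proof -
  obtain a b c d where P4: "X = {a, b, c, d}" "a \<in> I" "d \<in> I" "b \<in> K" "c \<in> K"
    "E a b" "E c d" "\<not> E a c" "\<not> E b d"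
    using induced_P4_in_split_graph[OF assms(1,2)] .
  note S = split_graphD[OF assms(1)]
  have "(u = a \<and> w = d) \<or> (u = d \<and> w = a)" using S(3) P4 assms(3-7) by blast
  then show ?thesis using that P4 S(6) by blast
qed

lemma card_le_indep_number:
  assumes "finite V" "A \<subseteq> V" "is_indep E A"
  shows "card A \<le> indep_number V E"
proof -
  have "{card A | A. A \<subseteq> V \<and> is_indep E A} \<subseteq> card ` Pow V" by auto
  then have "finite {card A | A. A \<subseteq> V \<and> is_indep E A}"
    using assms(1) finite_subset by blast
  then show ?thesis unfolding indep_number_def using assms(2,3) by (auto intro: Max_ge)
qed

lemma balanced_obtains_neighbour_in_indep_part:
  assumes "split_graph V E K I" "balanced V E K I" "x \<in> K"
  obtains w where "w \<in> I" "E x w"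
proof -
  note S = split_graphD[OF assms(1)]
  have "\<exists>w\<in>I. E x w"
  proof (rule ccontr)
    assume "\<not> (\<exists>w\<in>I. E x w)"
    then have "is_indep E (insert x I)"
      using S(5-7) unfolding is_indep_def by blast
    then have "card (insert x I) \<le> indep_number V E"
      using S(1,2) assms(3) by (intro card_le_indep_number) auto
    moreover have "card (insert x I) = card I + 1"
      using S(1-3) assms(3) by (simp add: disjoint_iff)
    ultimately show False using assms(2) unfolding balanced_def by linarith
  qed
  then show ?thesis using that by blast
qed

lemma indep_part_vertex_active:
  assumes "factor_complete V E I" "card I \<ge> 2" "x \<in> I"
  shows "active V E x"
proof -
  have "finite I" "\<not> card I \<le> Suc 0" using assms(2) card.infinite by force+
  then have "\<exists>a\<in>I. \<exists>b\<in>I. a \<noteq> b" using card_le_Suc0_iff_eq by blast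
  then obtain v where "v \<in> I" "v \<noteq> x" by blast
  then have "factor_adj V E x v" using assms(1,3) unfolding factor_complete_def by auto
  then obtain X where "induced_P4 V E X" "x \<in> X"
    by (rule factor_adj_obtains_induced_P4)
  then show ?thesis by (rule induced_P4_imp_active)
qed

lemma clique_part_vertex_active_if_non_neighbour:
  assumes "split_graph V E K I" "factor_complete V E I"
    and "x \<in> K" "w \<in> I" "E x w" "u \<in> I" "\<not> E x u"
  shows "active V E x"
proof -
  note S = split_graphD[OF assms(1)]
  have "u \<noteq> w" using assms(5,7) by blast
  then have "factor_adj V E u w" using assms(2,4,6) unfolding factor_complete_def by blast
  then obtain X where X: "induced_P4 V E X" "u \<in> X" "w \<in> X"
    by (rule factor_adj_obtains_induced_P4)
  obtain y where y: "y \<in> K" "E u y" "\<not> E w y"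
    using induced_P4_separating_neighbour[OF assms(1) X assms(6,4) \<open>u \<noteq> w\<close>] .
  have "x \<noteq> y" using S(6) y(2) assms(7) by blast
  then have "two_switchable V E x w u y"
    unfolding two_switchable_def using S(2,3) assms(3-7) y \<open>u \<noteq> w\<close> by auto
  then show ?thesis unfolding active_def by blast
qed

theorem lemma4p1:
  fixes V :: "'a set" and E :: "'a \<Rightarrow> 'a \<Rightarrow> bool" and K I :: "'a set" and x :: 'a
  assumes "split_graph V E K I"
    and "balanced V E K I"
    and "card I \<ge> 2"
    and "factor_complete V E I"
    and "x \<in> V"
    and "\<not> active V E x"
  shows "universal V E x"
proof -
  note S = split_graphD[OF assms(1)]
  have "x \<notin> I" using indep_part_vertex_active[OF assms(4,3)] assms(6) by blast
  then have x: "x \<in> K" using S(2) assms(5) by blast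
  obtain w where "w \<in> I" "E x w"
    using balanced_obtains_neighbour_in_indep_part[OF assms(1,2) x] .
  have "E x u" if "u \<in> V" "u \<noteq> x" for u
  proof (cases "u \<in> K")
    case True
    then show ?thesis using S(4) x that(2) unfolding is_clique_def by simp
  next
    case False
    then have "u \<in> I" using S(2) that(1) by blast
    then show ?thesis
      using clique_part_vertex_active_if_non_neighbour[OF assms(1,4) x \<open>w \<in> I\<close> \<open>E x w\<close>]
        assms(6) by blast
  qed
  then show ?thesis unfolding universal_def by blast
qed

end
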